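(* Let $a<b$ be real numbers and $\{\mathcal N_x\}_{x\in[a,b]}$ a family of quantum channels. Suppose $x\mapsto\mathcal Q_\leftrightarrow(\mathcal N_x)$ is continuous and strictly decreasing on $[a,b]$, and suppose there are functions $\mathcal Q_{lb}(\mathcal N_x),\mathcal Q_{ub}(\mathcal N_x)$, continuous and strictly increasing in $x\in[a,b]$, with $\mathcal Q_{lb}(\mathcal N_x)\le\mathcal Q(\mathcal N_x)\le\mathcal Q_{ub}(\mathcal N_x)<\mathcal Q_\leftrightarrow(\mathcal N_x)$ for all $x\in[a,b]$ and $\mathcal Q_{lb}(\mathcal N_a)=\mathcal Q_{ub}(\mathcal N_a)$. Then there is a strictly decreasing sequence $(x_n)_{n\in\mathbb N}$ with $a<x_n<b$ for all $n$ such that for all $n<m$: $$\mathcal Q(\mathcal N_{x_m})<\mathcal Q(\mathcal N_{x_n})\quad\text{and}\quad \mathcal Q_\leftrightarrow(\mathcal N_{x_m})>\mathcal Q_\leftrightarrow(\mathcal N_{x_n}).$$ The analogous statement holds with $\mathcal P,\mathcal P_\leftrightarrow$ in place of $\mathcal Q,\mathcal Q_\leftrightarrow$.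
   Context: $\mathcal Q$ denotes the quantum capacity (with free forward classical communication) and $\mathcal Q_\leftrightarrow$ the quantum capacity assisted by free two-way classical communication; $\mathcal P,\mathcal P_\leftrightarrow$ are the corresponding private classical capacities. *)

theory Defs
  imports Complex_Main
begin

end

theory Submission
  imports Defs
begin

text \<open>
  Since \<open>Cap_ub\<close> is continuous at \<open>a\<close> and \<open>Cap_lb\<close> strictly increasing with
  \<open>Cap_lb (N a) = Cap_ub (N a)\<close>, below every \<open>x > a\<close> there is a \<open>y > a\<close> with
  \<open>Cap_ub (N y) < Cap_lb (N x)\<close>; the sandwich then forces \<open>Cap (N y) < Cap (N x)\<close>, while the
  two-way capacity grows from \<open>x\<close> to \<open>y\<close>. Iterating this step by dependent choice gives the
  sequence. The private-capacity version is the same theorem, instantiated at those capacities.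
\<close>

lemma (in preorder) lift_Suc_antimono_less:
  assumes "\<And>n. f (Suc n) < f n" and "n < m"
  shows "f m < f n"
  using \<open>n < m\<close> by (induct n m rule: less_Suc_induct) (auto intro: assms order.strict_trans)

lemma tendsto_at_right_below_point:
  fixes U :: "'a::{linorder_topology,dense_linorder} \<Rightarrow> 'b::linorder_topology"
  assumes "(U \<longlongrightarrow> U a) (at_right a)" and "U a < c" and "a < x"
  shows "\<exists>y. a < y \<and> y < x \<and> U y < c"
proof -
  obtain b where "a < b" and below_c: "\<And>y. a < y \<Longrightarrow> y < b \<Longrightarrow> U y < c"
    using order_tendstoD(2)[OF assms(1,2)] \<open>a < x\<close> by (auto simp: eventually_at_right)
  obtain y where "a < y" "y < min b x"
    using dense \<open>a < b\<close> \<open>a < x\<close> by (metis min_less_iff_conj)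
  then show ?thesis using below_c by auto
qed

lemma decreasing_chain_choice:
  fixes a c :: "'a::dense_linorder"
  assumes "a < c" and step: "\<And>x. a < x \<Longrightarrow> x < c \<Longrightarrow> \<exists>y. a < y \<and> y < x \<and> R y x"
  obtains xs :: "nat \<Rightarrow> 'a"
  where "\<And>n. a < xs n \<and> xs n < c" and "\<And>n. xs (Suc n) < xs n \<and> R (xs (Suc n)) (xs n)"
proof -
  have "\<exists>xs. \<forall>n. (a < xs n \<and> xs n < c) \<and> (xs (Suc n) < xs n \<and> R (xs (Suc n)) (xs n))"
  proof (rule dependent_nat_choice)
    show "\<exists>x. a < x \<and> x < c" using dense[OF \<open>a < c\<close>] .
  next
    fix x n assume "a < x \<and> x < c"
    then show "\<exists>y. (a < y \<and> y < c) \<and> y < x \<and> R y x" using step by force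
  qed
  then show thesis using that by blast
qed

theorem mainTheorem9:
  fixes a b :: real
    and N :: "real \<Rightarrow> 'c"
    and Cap CapTW Cap_lb Cap_ub :: "'c \<Rightarrow> real"
  assumes "a < b"
    and "continuous_on {a..b} (\<lambda>x. CapTW (N x))"
    and "monotone_on {a..b} (<) (>) (\<lambda>x. CapTW (N x))"
    and "continuous_on {a..b} (\<lambda>x. Cap_lb (N x))"
    and "monotone_on {a..b} (<) (<) (\<lambda>x. Cap_lb (N x))"
    and "continuous_on {a..b} (\<lambda>x. Cap_ub (N x))"
    and "monotone_on {a..b} (<) (<) (\<lambda>x. Cap_ub (N x))"
    and "\<forall>x\<in>{a..b}. Cap_lb (N x) \<le> Cap (N x) \<and> Cap (N x) \<le> Cap_ub (N x)
                    \<and> Cap_ub (N x) < CapTW (N x)"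
    and "Cap_lb (N a) = Cap_ub (N a)"
  shows "\<exists>xs :: nat \<Rightarrow> real. monotone (<) (>) xs \<and> (\<forall>n. a < xs n \<and> xs n < b) \<and>
           (\<forall>n m. n < m \<longrightarrow> Cap (N (xs m)) < Cap (N (xs n)) \<and> CapTW (N (xs m)) > CapTW (N (xs n)))"
proof -
  have separating_point: "\<exists>y. a < y \<and> y < x \<and> Cap_ub (N y) < Cap_lb (N x)"
    if "a < x" "x < b" for x
  proof (rule tendsto_at_right_below_point[OF continuous_on_Icc_at_rightD[OF assms(6,1)] _ \<open>a < x\<close>])
    have "Cap_lb (N a) < Cap_lb (N x)"
      by (rule monotone_onD[OF assms(5)]) (use that in auto)
    then show "Cap_ub (N a) < Cap_lb (N x)" using assms(9) by simp
  qed
  obtain xs where xs_in: "\<And>n. a < xs n \<and> xs n < b"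
    and xs_step: "\<And>n. xs (Suc n) < xs n \<and> Cap_ub (N (xs (Suc n))) < Cap_lb (N (xs n))"
    using decreasing_chain_choice[where R = "\<lambda>y x. Cap_ub (N y) < Cap_lb (N x)",
        OF \<open>a < b\<close> separating_point] by blast
  have xs_Icc: "xs n \<in> {a..b}" for n using xs_in[of n] by auto
  have Cap_bounds: "Cap_lb (N (xs n)) \<le> Cap (N (xs n)) \<and> Cap (N (xs n)) \<le> Cap_ub (N (xs n))" for n
    using assms(8) xs_Icc by blast
  have Cap_step: "Cap (N (xs (Suc n))) < Cap (N (xs n))" for n
    using xs_step[of n] Cap_bounds[of n] Cap_bounds[of "Suc n"] by linarith
  have CapTW_step: "CapTW (N (xs n)) < CapTW (N (xs (Suc n)))" for n
    by (rule monotone_onD[OF assms(3) xs_Icc xs_Icc]) (use xs_step in blast)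
  show ?thesis
  proof (intro exI conjI allI impI)
    show "monotone (<) (>) xs"
      by (rule monotoneI) (use lift_Suc_antimono_less[of xs] xs_step in blast)
    fix n m :: nat
    assume "n < m"
    show "Cap (N (xs m)) < Cap (N (xs n))"
      using lift_Suc_antimono_less[of "\<lambda>n. Cap (N (xs n))", OF Cap_step \<open>n < m\<close>] .
    show "CapTW (N (xs m)) > CapTW (N (xs n))"
      using lift_Suc_mono_less[of "\<lambda>n. CapTW (N (xs n))", OF CapTW_step \<open>n < m\<close>] .
  qed (use xs_in in blast)+
qed

end
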